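(* Every $3$-regular graph $H$ on $n>6$ vertices satisfies $m(H)\le 4$.
   Context: All graphs are finite and simple. For graphs $G_1=(V,E_1)$, $G_2=(V,E_2)$, their symmetric difference is $(V,E_1\oplus E_2)$, where $E_1\oplus E_2$ is the set of edges in exactly one of $E_1,E_2$. A connectivity code for $H=(V,E)$ is a collection of distinct spanning subgraphs $(V,E')$, $E'\subseteq E$, such that the symmetric difference of any two distinct members is a connected graph on $V$; $m(H)$ is the maximum cardinality of a connectivity code for $H$. *)

theory Defs
  imports Main
begin

definition simple_graph :: "'a set \<Rightarrow> 'a set set \<Rightarrow> bool" where
  "simple_graph V E \<longleftrightarrow> finite V \<and> (\<forall>e\<in>E. \<exists>u v. u \<noteq> v \<and> u \<in> V \<and> v \<in> V \<and> e = {u, v})"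

definition degree :: "'a set set \<Rightarrow> 'a \<Rightarrow> nat" where
  "degree E v = card {e \<in> E. v \<in> e}"

definition regular :: "nat \<Rightarrow> 'a set \<Rightarrow> 'a set set \<Rightarrow> bool" where
  "regular k V E \<longleftrightarrow> (\<forall>v\<in>V. degree E v = k)"

definition adj_rel :: "'a set set \<Rightarrow> ('a \<times> 'a) set" where
  "adj_rel E = {(u, v). {u, v} \<in> E}"

definition connected_graph :: "'a set \<Rightarrow> 'a set set \<Rightarrow> bool" where
  "connected_graph V E \<longleftrightarrow> (\<forall>u\<in>V. \<forall>v\<in>V. (u, v) \<in> (adj_rel E)\<^sup>*)"

definition sym_diff :: "'b set \<Rightarrow> 'b set \<Rightarrow> 'b set" where
  "sym_diff A B = (A - B) \<union> (B - A)"

text \<open>A connectivity code for H = (V,E): a set of spanning subgraphs (given by their edge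
  sets E' \<subseteq> E) whose pairwise symmetric differences are connected graphs on V.\<close>
definition connectivity_code :: "'a set \<Rightarrow> 'a set set \<Rightarrow> 'a set set set \<Rightarrow> bool" where
  "connectivity_code V E C \<longleftrightarrow>
     (\<forall>F\<in>C. F \<subseteq> E) \<and>
     (\<forall>F1\<in>C. \<forall>F2\<in>C. F1 \<noteq> F2 \<longrightarrow> connected_graph V (sym_diff F1 F2))"

definition m_code :: "'a set \<Rightarrow> 'a set set \<Rightarrow> nat" where
  "m_code V E = Max {card C | C. connectivity_code V E C}"

end

theory Submission
  imports Defs
begin

text \<open>Let \<open>n = |V|\<close>. A connected spanning graph has at least \<open>n - 1\<close> edges, and a cubic graph
  has \<open>3n/2\<close> edges, so \<open>n\<close> is even. If two codewords have edge sets of the same parity, their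
  symmetric difference has an even number of edges, which is therefore at least \<open>n\<close>. Among five
  codewords at least four of the ten pairs have equal parity, so the ten symmetric differences
  have at least \<open>10(n - 1) + 4\<close> edges in total. On the other hand an edge lying in \<open>a\<close> of the
  five codewords lies in \<open>a(5 - a) \<le> 6\<close> of the symmetric differences, giving at most
  \<open>6 \<cdot> 3n/2 = 9n\<close> edges in total. Hence \<open>n \<le> 6\<close>.\<close>

lemma rtrancl_map_rtrancl:
  assumes "(x, y) \<in> R\<^sup>*" and "\<And>a b. (a, b) \<in> R \<Longrightarrow> (f a, f b) \<in> S\<^sup>*"
  shows "(f x, f y) \<in> S\<^sup>*"
  using assms(1)
proof (induction rule: rtrancl_induct)
  case (step y z)
  then show ?case using assms(2) rtrancl_trans by metis
qed simp

lemma simple_graph_finite_edges: "simple_graph V E \<Longrightarrow> finite E"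
proof -
  assume G: "simple_graph V E"
  then have "E \<subseteq> Pow V" "finite V" unfolding simple_graph_def by fastforce+
  then show "finite E" by (meson finite_Pow_iff finite_subset)
qed

lemma simple_graph_subset: "simple_graph V E \<Longrightarrow> D \<subseteq> E \<Longrightarrow> simple_graph V D"
  unfolding simple_graph_def by blast

lemma simple_graph_contract_edge:
  assumes G: "simple_graph V D" and ab: "{a, b} \<in> D"
  defines "f \<equiv> \<lambda>x. if x = b then a else x"
  shows "simple_graph (V - {b}) (image f ` (D - {{a, b}}))"
  unfolding simple_graph_def
proof (intro conjI ballI)
  show "finite (V - {b})" using G unfolding simple_graph_def by simp
  have a: "a \<in> V" "a \<noteq> b" using G ab unfolding simple_graph_def by (auto simp: doubleton_eq_iff)
  fix e assume "e \<in> image f ` (D - {{a, b}})"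
  then obtain x y where xy: "x \<noteq> y" "x \<in> V" "y \<in> V" "{x, y} \<in> D" "{x, y} \<noteq> {a, b}"
    and e: "e = {f x, f y}"
    using G unfolding simple_graph_def by fastforce
  have "f x \<noteq> f y" using xy unfolding f_def by auto
  moreover have "f x \<in> V - {b}" "f y \<in> V - {b}" using xy a unfolding f_def by auto
  ultimately show "\<exists>u v. u \<noteq> v \<and> u \<in> V - {b} \<and> v \<in> V - {b} \<and> e = {u, v}"
    using e by blast
qed

lemma connected_graph_contract_edge:
  fixes a b :: 'a
  assumes conn: "connected_graph V D"
  defines "f \<equiv> \<lambda>x. if x = b then a else x"
  shows "connected_graph (V - {b}) (image f ` (D - {{a, b}}))"
  unfolding connected_graph_def
proof (intro ballI)
  fix s t assume st: "s \<in> V - {b}" "t \<in> V - {b}"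
  have "(s, t) \<in> (adj_rel D)\<^sup>*" using conn st unfolding connected_graph_def by blast
  then have "(f s, f t) \<in> (adj_rel (image f ` (D - {{a, b}})))\<^sup>*"
  proof (rule rtrancl_map_rtrancl)
    fix p q assume "(p, q) \<in> adj_rel D"
    then have pq: "{p, q} \<in> D" unfolding adj_rel_def by simp
    show "(f p, f q) \<in> (adj_rel (image f ` (D - {{a, b}})))\<^sup>*"
    proof (cases "{p, q} = {a, b}")
      case True
      then have "f p = f q" unfolding f_def by (auto simp: doubleton_eq_iff)
      then show ?thesis by simp
    next
      case False
      then have "f ` {p, q} \<in> image f ` (D - {{a, b}})" using pq by blast
      then show ?thesis unfolding adj_rel_def by auto
    qed
  qed
  moreover have "f s = s" "f t = t" using st unfolding f_def by auto
  ultimately show "(s, t) \<in> (adj_rel (image f ` (D - {{a, b}})))\<^sup>*" by simp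
qed

lemma connected_graph_card_le:
  assumes "simple_graph V D" and "connected_graph V D"
  shows "card V \<le> card D + 1"
  using assms
proof (induction "card V" arbitrary: V D rule: less_induct)
  case less
  show ?case
  proof (cases "card V \<le> 1")
    case False
    then obtain u v where uv: "u \<in> V" "v \<in> V" "u \<noteq> v"
      by (metis One_nat_def card.infinite card_le_Suc0_iff_eq not_less_eq_eq zero_le)
    have "(u, v) \<in> (adj_rel D)\<^sup>*" using less.prems(2) uv unfolding connected_graph_def by blast
    then obtain w where "(u, w) \<in> adj_rel D" using uv(3) by (metis converse_rtranclE)
    then have uw: "{u, w} \<in> D" unfolding adj_rel_def by simp
    then have w: "w \<in> V" "u \<noteq> w" using less.prems(1) unfolding simple_graph_def
      by (auto simp: doubleton_eq_iff)
    define f where "f = (\<lambda>x. if x = w then u else x)"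
    have finD: "finite D" using less.prems(1) by (rule simple_graph_finite_edges)
    have finV: "finite V" using less.prems(1) unfolding simple_graph_def by simp
    have "card (V - {w}) \<le> card (image f ` (D - {{u, w}})) + 1"
    proof (rule less.hyps)
      show "card (V - {w}) < card V" using w finV by (meson card_Diff1_less)
      show "simple_graph (V - {w}) (image f ` (D - {{u, w}}))"
        unfolding f_def using less.prems(1) uw by (rule simple_graph_contract_edge)
      show "connected_graph (V - {w}) (image f ` (D - {{u, w}}))"
        unfolding f_def using less.prems(2) by (rule connected_graph_contract_edge)
    qed
    also have "card (image f ` (D - {{u, w}})) \<le> card (D - {{u, w}})"
      using finD by (simp add: card_image_le)
    also have "\<dots> = card D - 1" using uw finD by simp
    finally have "card V - 1 \<le> card D - 1 + 1" using w finV by simp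
    moreover have "card D > 0" "card V > 0" using uw finD w finV by (auto simp: card_gt_0_iff)
    ultimately show ?thesis by linarith
  qed simp
qed

lemma regular_card_edges:
  assumes G: "simple_graph V E" and "regular k V E"
  shows "2 * card E = k * card V"
proof -
  have finV: "finite V" using G unfolding simple_graph_def by simp
  have "(\<Sum>v\<in>V. card {e\<in>E. v \<in> e}) = 2 * card E"
  proof (rule sum_multicount)
    show "\<forall>e\<in>E. card {v\<in>V. v \<in> e} = 2"
    proof
      fix e assume "e \<in> E"
      then obtain x y where "x \<noteq> y" "x \<in> V" "y \<in> V" "e = {x, y}"
        using G unfolding simple_graph_def by blast
      then have "{v\<in>V. v \<in> e} = {x, y}" "x \<noteq> y" by auto
      then show "card {v\<in>V. v \<in> e} = 2" by simp
    qed
  qed (use finV G simple_graph_finite_edges in auto)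
  moreover have "(\<Sum>v\<in>V. card {e\<in>E. v \<in> e}) = k * card V"
    using assms(2) unfolding regular_def degree_def by simp
  ultimately show ?thesis by simp
qed

lemma card_sym_diff_add:
  assumes "finite A" "finite B"
  shows "card (sym_diff A B) + 2 * card (A \<inter> B) = card A + card B"
proof -
  have "card (sym_diff A B) = card (A - B) + card (B - A)"
    unfolding sym_diff_def by (rule card_Un_disjoint) (use assms in auto)
  moreover have "card A = card (A - B) + card (A \<inter> B)"
    using assms card_Int_Diff[of A B] by simp
  moreover have "card B = card (B - A) + card (A \<inter> B)"
    using assms card_Int_Diff[of B A] by (simp add: Int_commute)
  ultimately show ?thesis by simp
qed

lemma even_card_sym_diff_iff:
  assumes "finite A" "finite B"
  shows "even (card (sym_diff A B)) \<longleftrightarrow> (even (card A) \<longleftrightarrow> even (card B))"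
  using card_sym_diff_add[OF assms] by (metis even_add even_mult_iff even_numeral)

text \<open>The parity bonus: an even number of edges cannot equal \<open>|V| - 1\<close> when \<open>|V|\<close> is even.\<close>
lemma card_le_card_sym_diff:
  assumes G: "simple_graph V E" and "A \<subseteq> E" "B \<subseteq> E"
    and conn: "connected_graph V (sym_diff A B)" and "even (card V)"
  shows "card V + (if even (card A) = even (card B) then 1 else 0) \<le> card (sym_diff A B) + 1"
proof -
  have "sym_diff A B \<subseteq> E" using assms(2,3) unfolding sym_diff_def by blast
  then have "simple_graph V (sym_diff A B)" using G by (rule simple_graph_subset[rotated])
  then have le: "card V \<le> card (sym_diff A B) + 1" using conn by (rule connected_graph_card_le)
  have "finite A" "finite B"
    using assms(2,3) simple_graph_finite_edges[OF G] finite_subset by auto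
  show ?thesis
  proof (cases "even (card A) = even (card B)")
    case True
    then have "even (card (sym_diff A B))"
      using \<open>finite A\<close> \<open>finite B\<close> by (simp add: even_card_sym_diff_iff)
    then have "card V \<noteq> card (sym_diff A B) + 1" using \<open>even (card V)\<close> by auto
    then show ?thesis using le True by simp
  qed (use le in simp)
qed

definition index_pairs :: "nat \<Rightarrow> (nat \<times> nat) set" where
  "index_pairs k = {(i, j). i < j \<and> j < k}"

lemma finite_index_pairs: "finite (index_pairs k)"
  unfolding index_pairs_def by (rule finite_subset[of _ "{..<k} \<times> {..<k}"]) auto

lemma card_index_pairs: "card (index_pairs k) = k choose 2"
proof (induction k)
  case (Suc k)
  have "index_pairs (Suc k) = index_pairs k \<union> (\<lambda>i. (i, k)) ` {..<k}"
    unfolding index_pairs_def by auto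
  moreover have "index_pairs k \<inter> (\<lambda>i. (i, k)) ` {..<k} = {}"
    unfolding index_pairs_def by auto
  ultimately have "card (index_pairs (Suc k)) = card (index_pairs k) + k"
    using finite_index_pairs by (simp add: card_Un_disjoint card_image inj_on_def)
  then show ?case using Suc.IH by (simp add: numeral_2_eq_2)
qed (simp add: index_pairs_def)

lemma four_mult_le_square_add:
  fixes x y :: nat
  shows "4 * (x * y) \<le> (x + y) * (x + y)"
proof -
  have "0 \<le> (int x - int y)\<^sup>2" by simp
  then have "int (4 * (x * y)) \<le> int ((x + y) * (x + y))"
    by (simp add: algebra_simps power2_eq_square)
  then show ?thesis by linarith
qed

text \<open>Ordering each pair so that its \<open>b\<close>-true index comes first embeds the pairs on which \<open>b\<close>
  differs into \<open>T \<times> F\<close>, where \<open>T\<close> and \<open>F\<close> partition the \<open>k\<close> indices.\<close>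
lemma card_index_pairs_differ_le:
  fixes b :: "nat \<Rightarrow> bool"
  shows "card {(i, j) \<in> index_pairs k. b i \<noteq> b j} \<le> k * k div 4"
proof -
  let ?T = "{i. i < k \<and> b i}" and ?F = "{i. i < k \<and> \<not> b i}"
  define g where "g = (\<lambda>(i, j). if b i then (i, j) else (j, i :: nat))"
  have "card {(i, j) \<in> index_pairs k. b i \<noteq> b j} \<le> card (?T \<times> ?F)"
  proof (rule card_inj_on_le)
    show "inj_on g {(i, j) \<in> index_pairs k. b i \<noteq> b j}"
      unfolding inj_on_def g_def index_pairs_def by auto
    show "g ` {(i, j) \<in> index_pairs k. b i \<noteq> b j} \<subseteq> ?T \<times> ?F"
      unfolding g_def index_pairs_def by auto
  qed simp
  also have "\<dots> = card ?T * card ?F" by (rule card_cartesian_product)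
  also have "\<dots> \<le> k * k div 4"
  proof -
    have "card ?T + card ?F = card (?T \<union> ?F)" by (rule card_Un_disjoint[symmetric]) auto
    also have "?T \<union> ?F = {..<k}" by auto
    finally have "card ?T + card ?F = k" by simp
    then show ?thesis using four_mult_le_square_add[of "card ?T" "card ?F"] by simp
  qed
  finally show ?thesis .
qed

lemma card_index_pairs_same_ge:
  fixes b :: "nat \<Rightarrow> bool"
  shows "k choose 2 \<le> card {(i, j) \<in> index_pairs k. b i = b j} + k * k div 4"
proof -
  let ?same = "{(i, j) \<in> index_pairs k. b i = b j}"
  let ?differ = "{(i, j) \<in> index_pairs k. b i \<noteq> b j}"
  have "card (index_pairs k) = card (?same \<union> ?differ)" by (rule arg_cong[where f = card]) auto
  also have "\<dots> = card ?same + card ?differ"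
    by (rule card_Un_disjoint) (auto intro: finite_subset[OF _ finite_index_pairs])
  finally show ?thesis using card_index_pairs card_index_pairs_differ_le[of k b] by simp
qed

text \<open>Double counting: an edge lying in \<open>a\<close> of the \<open>k\<close> sets lies in \<open>a (k - a)\<close> of the
  pairwise symmetric differences.\<close>
lemma sum_card_sym_diff_le:
  assumes "finite E" and "\<And>i. i < k \<Longrightarrow> F i \<subseteq> E"
  shows "(\<Sum>(i, j)\<in>index_pairs k. card (sym_diff (F i) (F j))) \<le> k * k div 4 * card E"
proof -
  let ?R = "\<lambda>(i, j) e. (e \<in> F i) \<noteq> (e \<in> F j)"
  have "(\<Sum>(i, j)\<in>index_pairs k. card (sym_diff (F i) (F j)))
      = (\<Sum>p\<in>index_pairs k. card {e\<in>E. ?R p e})"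
  proof (rule sum.cong)
    fix p assume "p \<in> index_pairs k"
    then obtain i j where p: "p = (i, j)" "i < k" "j < k" unfolding index_pairs_def by auto
    then have "sym_diff (F i) (F j) = {e\<in>E. ?R p e}"
      using assms(2)[of i] assms(2)[of j] unfolding sym_diff_def by auto
    then show "(case p of (i, j) \<Rightarrow> card (sym_diff (F i) (F j))) = card {e\<in>E. ?R p e}"
      using p by simp
  qed simp
  also have "\<dots> = (\<Sum>e\<in>E. card {p\<in>index_pairs k. ?R p e})"
    by (rule sum_multicount_gen) (use assms(1) finite_index_pairs in auto)
  also have "\<dots> \<le> (\<Sum>e\<in>E. k * k div 4)"
  proof (rule sum_mono)
    fix e
    show "card {p\<in>index_pairs k. ?R p e} \<le> k * k div 4"
      using card_index_pairs_differ_le[of k "\<lambda>i. e \<in> F i"] by (simp add: case_prod_beta')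
  qed
  finally show ?thesis by (simp add: mult.commute)
qed

lemma obtain_inj_on_lessThan:
  assumes "n \<le> card C"
  obtains F :: "nat \<Rightarrow> 'a" where "inj_on F {..<n}" and "F ` {..<n} \<subseteq> C"
proof -
  obtain T where "T \<subseteq> C" "card T = n" "finite T" using assms by (rule obtain_subset_with_card_n)
  moreover obtain F where "bij_betw F {0..<card T} T" using ex_bij_betw_nat_finite \<open>finite T\<close> by blast
  ultimately show ?thesis using that by (auto simp: bij_betw_def atLeast0LessThan)
qed

lemma connectivity_code_card_le_4:
  assumes G: "simple_graph V E" and cubic: "regular 3 V E" and n: "card V > 6"
    and code: "connectivity_code V E C"
  shows "card C \<le> 4"
proof (rule ccontr)
  assume "\<not> card C \<le> 4"
  then obtain F :: "nat \<Rightarrow> 'a set set" where F: "inj_on F {..<5}" "F ` {..<5} \<subseteq> C"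
    using obtain_inj_on_lessThan[of 5 C] by force
  let ?P = "index_pairs 5" and ?n = "card V" and ?m = "card E"
  let ?d = "\<lambda>(i, j). card (sym_diff (F i) (F j))"
  let ?same = "\<lambda>(i, j). even (card (F i)) = even (card (F j))"
  have pairs: "card ?P = 10" by (simp add: card_index_pairs choose_two)
  have edges: "2 * ?m = 3 * ?n" using G cubic by (rule regular_card_edges)
  then have "even ?n" by presburger
  have sub: "F i \<subseteq> E" if "i < 5" for i
    using F code that unfolding connectivity_code_def by blast
  have "(\<Sum>p\<in>?P. ?n + (if ?same p then 1 else 0)) \<le> (\<Sum>p\<in>?P. ?d p + 1)"
  proof (rule sum_mono)
    fix p assume "p \<in> ?P"
    then obtain i j where p: "p = (i, j)" "i < 5" "j < 5" "i \<noteq> j" unfolding index_pairs_def by auto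
    then have "F i \<noteq> F j" "F i \<in> C" "F j \<in> C"
      using F unfolding inj_on_def by auto
    then have "connected_graph V (sym_diff (F i) (F j))"
      using code unfolding connectivity_code_def by blast
    then show "?n + (if ?same p then 1 else 0) \<le> ?d p + 1"
      using card_le_card_sym_diff[OF G sub sub] p \<open>even ?n\<close> by simp
  qed
  moreover have "(\<Sum>p\<in>?P. ?n + (if ?same p then 1 else 0)) = 10 * ?n + card {p\<in>?P. ?same p}"
    using finite_index_pairs by (simp add: sum.distrib sum.If_cases Int_def pairs)
  moreover have "(\<Sum>p\<in>?P. ?d p + 1) \<le> 6 * ?m + 10"
    using sum_card_sym_diff_le[of E 5 F] simple_graph_finite_edges[OF G] sub
    by (subst sum.distrib) (simp add: pairs)
  moreover have "card {p\<in>?P. ?same p} \<ge> 4"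
    using card_index_pairs_same_ge[of 5 "\<lambda>i. even (card (F i))"] pairs
    by (simp add: card_index_pairs case_prod_beta')
  ultimately show False using edges n by linarith
qed

theorem mainTheorem13:
  fixes V :: "'a set" and E :: "'a set set"
  assumes "simple_graph V E"
    and "regular 3 V E"
    and "card V > 6"
  shows "m_code V E \<le> 4"
proof -
  let ?S = "{card C | C. connectivity_code V E C}"
  have bounded: "?S \<subseteq> {..4}" using connectivity_code_card_le_4[OF assms] by auto
  have "connectivity_code V E {}" unfolding connectivity_code_def by simp
  then have "?S \<noteq> {}" by blast
  with bounded show ?thesis
    unfolding m_code_def by (meson Max_le_iff atMost_iff finite_atMost finite_subset subsetD)
qed

end
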